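(* Consider the Com-IC model with GAPs in $\mathbf{Q}^+$ and fixed seed sets $S_\mathcal{A},S_\mathcal{B}$. Fix the live/blocked status of every edge, the thresholds $\alpha^v_\mathcal{A},\alpha^v_\mathcal{B}$ and the coins $\tau_v$ of every node. Then the final sets of $\mathcal{A}$-adopted and $\mathcal{B}$-adopted nodes are the same for every choice of the tie-breaking permutations $\pi_v$, $v\in V$; hence the tie-breaking rule does not affect the outcome in the mutual complementarity case.
   Context: Com-IC model. Let $G=(V,E,p)$ be a directed graph with $p:E\to[0,1]$ and $N^-(v)$ the in-neighbours of $v$. Two items $\mathcal{A},\mathcal{B}$; GAPs $\mathbf{Q}=(q_{\mathcal{A}|\emptyset},q_{\mathcal{A}|\mathcal{B}},q_{\mathcal{B}|\emptyset},q_{\mathcal{B}|\mathcal{A}})\in[0,1]^4$. Given seed sets $S_\mathcal{A},S_\mathcal{B}\subseteq V$, randomness: each edge $(u,v)$ independently live w.p. $p(u,v)$; each node $v$ independently draws $\alpha^v_\mathcal{A},\alpha^v_\mathcal{B}$ uniform on $[0,1]$, a uniformly random permutation $\pi_v$ of $N^-(v)$, and a fair coin $\tau_v\in\{\mathcal{A},\mathcal{B}\}$. For each item $X$ each node is $X$-idle, $X$-suspended, $X$-adopted or $X$-rejected; initially all idle. At step $0$ nodes of $S_\mathcal{A}$ become $\mathcal{A}$-adopted and nodes of $S_\mathcal{B}$ become $\mathcal{B}$-adopted (order for nodes in both given by $\tau_v$). At step $t\ge1$, $v$ is informed of $X$ by in-neighbour $u$ if $(u,v)$ is live and $u$ adopted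 $X$ at step $t-1$; informing in-neighbours are processed in order $\pi_v$ (an in-neighbour that adopted both items is processed for both, in its adoption order). When $v$ is informed of $X$ ($Y$ the other item) while $X$-idle: if $Y$-adopted, $v$ becomes $X$-adopted if $\alpha^v_X\le q_{X|Y}$, else $X$-rejected; otherwise $X$-adopted if $\alpha^v_X\le q_{X|\emptyset}$, else $X$-suspended. Informing a non-$X$-idle node of $X$ has no effect. Reconsideration: when an $X$-suspended node becomes $Y$-adopted, it becomes $X$-adopted if $\alpha^v_X\le q_{X|Y}$, else $X$-rejected. The process stops when nothing changes. $\mathbf{Q}^+$: $q_{\mathcal{A}|\emptyset}\le q_{\mathcal{A}|\mathcal{B}}$ and $q_{\mathcal{B}|\emptyset}\le q_{\mathcal{B}|\mathcal{A}}$. *)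

theory Defs
  imports Complex_Main
begin

datatype item = IA | IB

fun other :: "item \<Rightarrow> item" where
  "other IA = IB" | "other IB = IA"

datatype status = Idle | Suspended | Adopted | Rejected

text \<open>GAPs Q = (q_{A|0}, q_{A|B}, q_{B|0}, q_{B|A}).\<close>
type_synonym gaps = "real \<times> real \<times> real \<times> real"

fun qnull :: "gaps \<Rightarrow> item \<Rightarrow> real" where
  "qnull (a0, ab, b0, ba) IA = a0" | "qnull (a0, ab, b0, ba) IB = b0"

fun qcond :: "gaps \<Rightarrow> item \<Rightarrow> real" where
  "qcond (a0, ab, b0, ba) IA = ab" | "qcond (a0, ab, b0, ba) IB = ba"

definition gaps_valid :: "gaps \<Rightarrow> bool" where
  "gaps_valid Q \<longleftrightarrow> (\<forall>X. 0 \<le> qnull Q X \<and> qnull Q X \<le> 1 \<and> 0 \<le> qcond Q X \<and> qcond Q X \<le> 1)"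

definition Qplus :: "gaps \<Rightarrow> bool" where
  "Qplus Q \<longleftrightarrow> qnull Q IA \<le> qcond Q IA \<and> qnull Q IB \<le> qcond Q IB"

text \<open>Local state of a node: item statuses, plus the list (in order) of items it adopted
in the current step.\<close>

definition inform :: "gaps \<Rightarrow> (item \<Rightarrow> real) \<Rightarrow> item
    \<Rightarrow> (item \<Rightarrow> status) \<times> item list \<Rightarrow> (item \<Rightarrow> status) \<times> item list" where
  "inform Q al X s =
     (let st = fst s; nl = snd s; Y = other X in
      if st X \<noteq> Idle then s
      else if st Y = Adopted then
        (if al X \<le> qcond Q X then (st(X := Adopted), nl @ [X]) else (st(X := Rejected), nl))
      else if al X \<le> qnull Q X then
        (if st Y = Suspended then
           (if al Y \<le> qcond Q Y then (st(X := Adopted, Y := Adopted), nl @ [X, Y])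
            else (st(X := Adopted, Y := Rejected), nl @ [X]))
         else (st(X := Adopted), nl @ [X]))
      else (st(X := Suspended), nl))"

type_synonym 'v state = "('v \<Rightarrow> item \<Rightarrow> status) \<times> ('v \<Rightarrow> item list)"

definition init_state :: "'v set \<Rightarrow> 'v set \<Rightarrow> ('v \<Rightarrow> item) \<Rightarrow> 'v state" where
  "init_state SA SB tau =
     ((\<lambda>v X. if (X = IA \<and> v \<in> SA) \<or> (X = IB \<and> v \<in> SB) then Adopted else Idle),
      (\<lambda>v. if v \<in> SA \<and> v \<in> SB then [tau v, other (tau v)]
           else if v \<in> SA then [IA] else if v \<in> SB then [IB] else []))"

text \<open>Informing events at v in a step: in-neighbours in order prm v, via live edges, each
contributing the items it adopted in the previous step, in adoption order.\<close>
definition events :: "('v \<times> 'v) set \<Rightarrow> ('v \<Rightarrow> 'v list) \<Rightarrow> ('v \<Rightarrow> item list) \<Rightarrow> 'v \<Rightarrow> item list" where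
  "events L prm prev v = concat (map (\<lambda>u. if (u, v) \<in> L then prev u else []) (prm v))"

definition node_step :: "gaps \<Rightarrow> ('v \<Rightarrow> item \<Rightarrow> real) \<Rightarrow> ('v \<times> 'v) set \<Rightarrow> ('v \<Rightarrow> 'v list)
    \<Rightarrow> 'v state \<Rightarrow> 'v \<Rightarrow> (item \<Rightarrow> status) \<times> item list" where
  "node_step Q alpha L prm s v =
     fold (inform Q (alpha v)) (events L prm (snd s) v) (fst s v, [])"

definition step :: "gaps \<Rightarrow> ('v \<Rightarrow> item \<Rightarrow> real) \<Rightarrow> ('v \<times> 'v) set \<Rightarrow> ('v \<Rightarrow> 'v list)
    \<Rightarrow> 'v state \<Rightarrow> 'v state" where
  "step Q alpha L prm s =
     ((\<lambda>v. fst (node_step Q alpha L prm s v)), (\<lambda>v. snd (node_step Q alpha L prm s v)))"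

definition run :: "gaps \<Rightarrow> ('v \<Rightarrow> item \<Rightarrow> real) \<Rightarrow> ('v \<times> 'v) set \<Rightarrow> ('v \<Rightarrow> item)
    \<Rightarrow> ('v \<Rightarrow> 'v list) \<Rightarrow> 'v set \<Rightarrow> 'v set \<Rightarrow> nat \<Rightarrow> 'v state" where
  "run Q alpha L tau prm SA SB t = (step Q alpha L prm ^^ t) (init_state SA SB tau)"

text \<open>Final set of X-adopted nodes: adoption is permanent, so these are the nodes
X-adopted at some step.\<close>
definition final_adopted :: "'v set \<Rightarrow> gaps \<Rightarrow> ('v \<Rightarrow> item \<Rightarrow> real) \<Rightarrow> ('v \<times> 'v) set
    \<Rightarrow> ('v \<Rightarrow> item) \<Rightarrow> ('v \<Rightarrow> 'v list) \<Rightarrow> 'v set \<Rightarrow> 'v set \<Rightarrow> item \<Rightarrow> 'v set" where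
  "final_adopted V Q alpha L tau prm SA SB X =
     {v \<in> V. \<exists>t. fst (run Q alpha L tau prm SA SB t) v X = Adopted}"

definition in_nbrs :: "('v \<times> 'v) set \<Rightarrow> 'v \<Rightarrow> 'v set" where
  "in_nbrs E v = {u. (u, v) \<in> E}"

definition valid_tiebreak :: "'v set \<Rightarrow> ('v \<times> 'v) set \<Rightarrow> ('v \<Rightarrow> 'v list) \<Rightarrow> bool" where
  "valid_tiebreak V E prm \<longleftrightarrow> (\<forall>v\<in>V. distinct (prm v) \<and> set (prm v) = in_nbrs E v)"

end

theory Submission imports Defs begin

text \<open>Informing a node twice of
the same item is the same as informing it once, and in the complementary case \<open>Q\<^sup>+\<close> informing
it of \<open>A\<close> and of \<open>B\<close> in either order yields the same statuses and the same newly adopted items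
(only their order may differ). Hence the result of a step at a node depends only on the set of
events it receives, and by induction on the steps the statuses and the sets of items adopted in
the last step agree for any two tie-breaking permutations.\<close>

definition node_equiv :: "(item \<Rightarrow> status) \<times> item list \<Rightarrow> (item \<Rightarrow> status) \<times> item list \<Rightarrow> bool" where
  "node_equiv s s' \<longleftrightarrow> fst s = fst s' \<and> set (snd s) = set (snd s')"

lemma node_equiv_refl [simp]: "node_equiv s s"
  by (simp add: node_equiv_def)

lemma node_equiv_sym: "node_equiv s t \<Longrightarrow> node_equiv t s"
  by (simp add: node_equiv_def)

lemma node_equiv_trans: "node_equiv s t \<Longrightarrow> node_equiv t u \<Longrightarrow> node_equiv s u"
  by (simp add: node_equiv_def)

lemma inform_node_equiv: "node_equiv s s' \<Longrightarrow> node_equiv (inform Q a X s) (inform Q a X s')"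
  by (cases s; cases s') (auto simp: node_equiv_def inform_def Let_def)

lemma fold_inform_node_equiv:
  "node_equiv s s' \<Longrightarrow> node_equiv (fold (inform Q a) xs s) (fold (inform Q a) xs s')"
  by (induction xs arbitrary: s s') (simp_all add: inform_node_equiv)

lemma inform_idem: "inform Q a X (inform Q a X s) = inform Q a X s"
  by (cases s; cases X) (auto simp: inform_def Let_def)

lemma inform_swap_node_equiv:
  assumes "Qplus Q"
  shows "node_equiv (inform Q a IA (inform Q a IB s)) (inform Q a IB (inform Q a IA s))"
  using assms by (cases s) (auto simp: inform_def Let_def node_equiv_def Qplus_def fun_eq_iff)

definition canonical_events :: "item set \<Rightarrow> item list" where
  "canonical_events S = filter (\<lambda>X. X \<in> S) [IA, IB]"

lemma inform_fold_canonical_events: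
  assumes "Qplus Q"
  shows "node_equiv (fold (inform Q a) (canonical_events S) (inform Q a X s))
                    (fold (inform Q a) (canonical_events (insert X S)) s)"
proof -
  have swap: "node_equiv (inform Q a IB (inform Q a IA s)) (inform Q a IA (inform Q a IB s))"
    using inform_swap_node_equiv [OF assms] node_equiv_sym by blast
  have "node_equiv (inform Q a IB (inform Q a IA (inform Q a IB s)))
                   (inform Q a IB (inform Q a IB (inform Q a IA s)))"
    using inform_node_equiv [OF inform_swap_node_equiv [OF assms]] .
  then have absorb: "node_equiv (inform Q a IB (inform Q a IA (inform Q a IB s)))
                                (inform Q a IB (inform Q a IA s))"
    by (simp add: inform_idem)
  show ?thesis
    by (cases X; cases "IA \<in> S"; cases "IB \<in> S")
      (auto simp: canonical_events_def inform_idem insert_absorb swap absorb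
        inform_swap_node_equiv [OF assms])
qed

lemma fold_inform_canonical_events:
  assumes "Qplus Q"
  shows "node_equiv (fold (inform Q a) xs s) (fold (inform Q a) (canonical_events (set xs)) s)"
proof (induction xs arbitrary: s)
  case Nil
  then show ?case by (simp add: canonical_events_def)
next
  case (Cons X xs)
  show ?case
    using node_equiv_trans [OF Cons.IH inform_fold_canonical_events [OF assms]] by simp
qed

lemma fold_inform_set_eq:
  assumes "Qplus Q" and "set xs = set ys"
  shows "node_equiv (fold (inform Q a) xs s) (fold (inform Q a) ys s)"
  using fold_inform_canonical_events [OF assms(1), of a xs s]
    fold_inform_canonical_events [OF assms(1), of a ys s] assms(2)
  by (auto simp: node_equiv_def)

lemma set_events_eq:
  assumes "set (prm v) = set (prm' v)"
    and "\<And>u. u \<in> set (prm v) \<Longrightarrow> set (prev u) = set (prev' u)"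
  shows "set (events L prm prev v) = set (events L prm' prev' v)"
  using assms unfolding events_def by auto

definition run_equiv :: "'v set \<Rightarrow> 'v state \<Rightarrow> 'v state \<Rightarrow> bool" where
  "run_equiv V r r' \<longleftrightarrow> (\<forall>v\<in>V. fst r v = fst r' v \<and> set (snd r v) = set (snd r' v))"

lemma step_run_equiv:
  assumes "E \<subseteq> V \<times> V" and "Qplus Q"
    and "valid_tiebreak V E prm" and "valid_tiebreak V E prm'"
    and "run_equiv V r r'"
  shows "run_equiv V (step Q alpha L prm r) (step Q alpha L prm' r')"
  unfolding run_equiv_def
proof
  fix v assume v: "v \<in> V"
  have nbrs: "set (prm v) = in_nbrs E v" "set (prm' v) = in_nbrs E v"
    using assms(3,4) v by (auto simp: valid_tiebreak_def)
  have "in_nbrs E v \<subseteq> V"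
    using assms(1) by (auto simp: in_nbrs_def)
  then have "set (events L prm (snd r) v) = set (events L prm' (snd r') v)"
    using assms(5) nbrs by (intro set_events_eq) (auto simp: run_equiv_def)
  moreover have "fst r v = fst r' v"
    using assms(5) v by (simp add: run_equiv_def)
  ultimately have "node_equiv (node_step Q alpha L prm r v) (node_step Q alpha L prm' r' v)"
    unfolding node_step_def using fold_inform_set_eq [OF assms(2)] by simp
  then show "fst (step Q alpha L prm r) v = fst (step Q alpha L prm' r') v
      \<and> set (snd (step Q alpha L prm r) v) = set (snd (step Q alpha L prm' r') v)"
    by (simp add: step_def node_equiv_def)
qed

lemma run_run_equiv:
  assumes "E \<subseteq> V \<times> V" and "Qplus Q"
    and "valid_tiebreak V E prm" and "valid_tiebreak V E prm'"
  shows "run_equiv V (run Q alpha L tau prm SA SB t) (run Q alpha L tau prm' SA SB t)"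
proof (induction t)
  case 0
  then show ?case by (simp add: run_def run_equiv_def)
next
  case (Suc t)
  then show ?case
    using step_run_equiv [OF assms] by (simp add: run_def)
qed

theorem lemma2:
  fixes V :: "'v set" and E L :: "('v \<times> 'v) set" and Q :: gaps
    and alpha :: "'v \<Rightarrow> item \<Rightarrow> real" and tau :: "'v \<Rightarrow> item"
    and SA SB :: "'v set" and prm prm' :: "'v \<Rightarrow> 'v list"
  assumes "finite V" and "E \<subseteq> V \<times> V" and "L \<subseteq> E"
    and "gaps_valid Q" and "Qplus Q"
    and "SA \<subseteq> V" and "SB \<subseteq> V"
    and "\<forall>v\<in>V. \<forall>X. 0 \<le> alpha v X \<and> alpha v X \<le> 1"
    and "valid_tiebreak V E prm" and "valid_tiebreak V E prm'"
  shows "final_adopted V Q alpha L tau prm SA SB IA = final_adopted V Q alpha L tau prm' SA SB IA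
       \<and> final_adopted V Q alpha L tau prm SA SB IB = final_adopted V Q alpha L tau prm' SA SB IB"
proof -
  have "\<forall>v\<in>V. fst (run Q alpha L tau prm SA SB t) v = fst (run Q alpha L tau prm' SA SB t) v" for t
    using run_run_equiv [OF assms(2,5,9,10), of alpha L tau SA SB t]
    by (simp add: run_equiv_def)
  then show ?thesis
    unfolding final_adopted_def by auto
qed

end
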